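(* Let $r>1$ and integers $N\ge1$, $K>2$. Define $$\gamma_1^*(r,K,N)=N\sum_{i=N}^\infty\frac1i\left(1-\frac1r\right)^i\left(1-\frac1{K-1}\right)^i,\qquad \gamma_2^*(r,K,N)=N\sum_{i=N}^\infty\frac1i\left(1-\frac1r\right)^i.$$ Then $$\frac{\gamma_1^*(r,K,N)}{\frac{r^N-(r-1)^N}{r^{N-1}}+\gamma_1^*(r,K,N)}\le\eta(r,K,N)\le\frac{\gamma_2^*(r,K,N)}{\frac{r^N-(r-1)^N}{r^{N-1}}+\gamma_2^*(r,K,N)}.$$
   Context: Single item auction with $N$ buyers whose values are i.i.d., each taking values $0<x^1<\dots<x^K$ with probabilities $p^i>0$, $\sum_ip^i=1$. Let $z^i=(\sum_{j=1}^ip^j)^N-(\sum_{j=1}^{i-1}p^j)^N$ and reserve index $t(x,p)=\max\{i: i\in\arg\max_{1\le k\le K}x^k\sum_{j=k}^Kp^j\}$. The efficiency loss ratio of the welfare-maximizing revenue-optimal auction is $\mathrm{ELR}_N(x,p)=\sum_{i=1}^{t(x,p)-1}z^ix^i/\sum_{i=1}^Kz^ix^i$. $\eta(r,K,N)$ is the supremum of $\mathrm{ELR}_N(x,p)$ over all such $p$ and all $x$ with $0<x^1<\dots<x^K\le rx^1$. *)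

theory Defs
  imports "HOL-Analysis.Analysis"
begin

text \<open>Values and probabilities are indexed by 1..K (functions nat => real).\<close>

definition zprob :: "nat \<Rightarrow> (nat \<Rightarrow> real) \<Rightarrow> nat \<Rightarrow> real" where
  "zprob N p i = (\<Sum>j=1..i. p j) ^ N - (\<Sum>j=1..<i. p j) ^ N"

definition reserve_index :: "nat \<Rightarrow> (nat \<Rightarrow> real) \<Rightarrow> (nat \<Rightarrow> real) \<Rightarrow> nat" where
  "reserve_index K x p = Max {i \<in> {1..K}. \<forall>k\<in>{1..K}.
      x k * (\<Sum>j=k..K. p j) \<le> x i * (\<Sum>j=i..K. p j)}"

definition ELR :: "nat \<Rightarrow> nat \<Rightarrow> (nat \<Rightarrow> real) \<Rightarrow> (nat \<Rightarrow> real) \<Rightarrow> real" where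
  "ELR N K x p = (\<Sum>i=1..<reserve_index K x p. zprob N p i * x i)
                 / (\<Sum>i=1..K. zprob N p i * x i)"

definition valid_dist :: "nat \<Rightarrow> (nat \<Rightarrow> real) \<Rightarrow> bool" where
  "valid_dist K p \<longleftrightarrow> (\<forall>i\<in>{1..K}. p i > 0) \<and> (\<Sum>i=1..K. p i) = 1"

definition valid_values :: "real \<Rightarrow> nat \<Rightarrow> (nat \<Rightarrow> real) \<Rightarrow> bool" where
  "valid_values r K x \<longleftrightarrow> 0 < x 1 \<and> (\<forall>i\<in>{1..<K}. x i < x (Suc i)) \<and> x K \<le> r * x 1"

definition eta :: "real \<Rightarrow> nat \<Rightarrow> nat \<Rightarrow> real" where
  "eta r K N = Sup {ELR N K x p | x p. valid_dist K p \<and> valid_values r K x}"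

definition gamma1 :: "real \<Rightarrow> nat \<Rightarrow> nat \<Rightarrow> real" where
  "gamma1 r K N = real N * (\<Sum>i. (1 / real (i + N)) * (1 - 1 / r) ^ (i + N)
                                   * (1 - 1 / (real K - 1)) ^ (i + N))"

definition gamma2 :: "real \<Rightarrow> nat \<Rightarrow> nat \<Rightarrow> real" where
  "gamma2 r K N = real N * (\<Sum>i. (1 / real (i + N)) * (1 - 1 / r) ^ (i + N))"

end

theory Submission
  imports Defs
begin

text \<open>Write a = 1 - 1/r and psi(u) = sum_{i >= N} u^i / i, whose derivative is u^(N-1) / (1 - u).
  Then gamma2 = N psi(a), gamma1 = N psi(a (1 - 1/(K-1))) and (r^N - (r-1)^N) / r^(N-1) = sum_{k<N} a^k.

  Upper bound: let x_t be the optimal reserve, q the probability of a value below it and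
  R = x_t (1 - q) the optimal revenue. Optimality of the reserve gives x_i <= R / (1 - F_i), with F_i
  the probability of a value below x_i, so the welfare lost below the reserve is at most R N psi(q),
  while the welfare kept is at least x_t (1 - q^N) = R sum_{k<N} q^k. Since x_t <= r x_1 <= r R we
  have q <= a, and psi(u) / sum_{k<N} u^k increases in u.

  Lower bound: the equal-revenue distribution with K - 1 atoms of mass a/(K-1) makes every price
  equally profitable, so the reserve is the top value, and the welfare lost dominates a
  Riemann-type sum for N psi(a - a/(K-1)).\<close>

text \<open>The function psi above (see log_tail_sums); in the finite sum the term n = 0 is u^0 / 0 = 0.\<close>
definition log_tail :: "nat \<Rightarrow> real \<Rightarrow> real" where
  "log_tail N u = - ln (1 - u) - (\<Sum>n<N. u ^ n / real n)"

lemma log_tail_sums: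
  assumes "\<bar>u\<bar> < 1"
  shows "(\<lambda>i. 1 / real (i + N) * u ^ (i + N)) sums log_tail N u"
proof -
  have "(\<lambda>n. - (u ^ n) / real n) sums ln (1 - u)"
    using ln_series'[of "- u"] assms by simp
  hence "(\<lambda>n. u ^ n / real n) sums (- ln (1 - u))"
    using sums_minus by fastforce
  hence "(\<lambda>i. u ^ (i + N) / real (i + N)) sums log_tail N u"
    unfolding log_tail_def by (rule sums_split_initial_segment)
  thus ?thesis by simp
qed

lemma log_tail_0 [simp]: "log_tail N 0 = 0"
  unfolding log_tail_def by (auto simp: power_0_left intro!: sum.neutral)

lemma log_tail_nonneg:
  assumes "0 \<le> u" "u < 1"
  shows "0 \<le> log_tail N u"
  using assms by (intro sums_le[OF _ sums_zero log_tail_sums]) auto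

lemma log_tail_has_derivative:
  assumes "u < 1" "N \<ge> 1"
  shows "(log_tail N has_real_derivative u ^ (N - 1) / (1 - u)) (at u)"
proof -
  have sum_eq: "1 / (1 - u) - (\<Sum>n<M. real n * u ^ (n - 1) / real n) = u ^ (M - 1) / (1 - u)"
    if "M \<ge> 1" for M
    using that
  proof (induction M rule: nat_induct_at_least)
    case (Suc n)
    then show ?case using assms(1) by (cases n) (auto simp: field_simps)
  qed simp
  have "(log_tail N has_real_derivative
          1 / (1 - u) - (\<Sum>n<N. real n * u ^ (n - 1) / real n)) (at u)"
    unfolding log_tail_def[abs_def] using assms(1)
    by (intro DERIV_diff DERIV_sum DERIV_cdivide DERIV_pow)
       (auto intro!: derivative_eq_intros simp: field_simps)
  thus ?thesis using sum_eq[OF assms(2)] by simp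
qed

lemma log_tail_minus_power_has_derivative:
  assumes "u < 1" "N \<ge> 1"
  shows "((\<lambda>u. real N * log_tail N u - u ^ N / (1 - c)) has_real_derivative
           real N * u ^ (N - 1) * (1 / (1 - u) - 1 / (1 - c))) (at u)"
proof (rule DERIV_cong)
  show "((\<lambda>u. real N * log_tail N u - u ^ N / (1 - c)) has_real_derivative
           real N * (u ^ (N - 1) / (1 - u)) - real N * u ^ (N - 1) / (1 - c)) (at u)"
    using log_tail_has_derivative[OF assms] DERIV_pow[of N u UNIV]
    by (intro DERIV_diff DERIV_cmult DERIV_cdivide) auto
qed (simp add: algebra_simps)

lemma power_diff_div_le_log_tail_diff:
  assumes "N \<ge> 1" "0 \<le> v" "v \<le> w" "w < 1"
  shows "(w ^ N - v ^ N) / (1 - v) \<le> real N * (log_tail N w - log_tail N v)"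
proof -
  have "real N * log_tail N v - v ^ N / (1 - v) \<le> real N * log_tail N w - w ^ N / (1 - v)"
  proof (rule DERIV_nonneg_imp_nondecreasing[OF assms(3)])
    fix u assume u: "v \<le> u" "u \<le> w"
    have "1 / (1 - v) \<le> 1 / (1 - u)" using u assms by (intro divide_left_mono) auto
    hence "0 \<le> real N * u ^ (N - 1) * (1 / (1 - u) - 1 / (1 - v))" using u assms by simp
    thus "\<exists>y. ((\<lambda>u. real N * log_tail N u - u ^ N / (1 - v)) has_real_derivative y) (at u) \<and> 0 \<le> y"
      using log_tail_minus_power_has_derivative[of u N v] u assms by auto
  qed
  thus ?thesis by (simp add: diff_divide_distrib right_diff_distrib)
qed

lemma log_tail_diff_le_power_diff_div:
  assumes "N \<ge> 1" "0 \<le> v" "v \<le> w" "w < 1"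
  shows "real N * (log_tail N w - log_tail N v) \<le> (w ^ N - v ^ N) / (1 - w)"
proof -
  have "real N * log_tail N w - w ^ N / (1 - w) \<le> real N * log_tail N v - v ^ N / (1 - w)"
  proof (rule DERIV_nonpos_imp_nonincreasing[OF assms(3)])
    fix u assume u: "v \<le> u" "u \<le> w"
    have "1 / (1 - u) \<le> 1 / (1 - w)" using u assms by (intro divide_left_mono) auto
    hence "real N * u ^ (N - 1) * (1 / (1 - u) - 1 / (1 - w)) \<le> 0"
      using u assms by (intro mult_nonneg_nonpos) auto
    thus "\<exists>y. ((\<lambda>u. real N * log_tail N u - u ^ N / (1 - w)) has_real_derivative y) (at u) \<and> y \<le> 0"
      using log_tail_minus_power_has_derivative[of u N w] u assms by auto
  qed
  thus ?thesis by (simp add: diff_divide_distrib right_diff_distrib)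
qed

lemma power_diff_le_next_power_diff:
  fixes u h :: real
  assumes "0 \<le> h" "h \<le> u"
  shows "u ^ N - (u - h) ^ N \<le> (u + h) ^ N - u ^ N"
proof (cases N)
  case (Suc n)
  have "(\<Sum>k<Suc n. u ^ k * (u - h) ^ (n - k)) \<le> (\<Sum>k<Suc n. (u + h) ^ k * u ^ (n - k))"
    using assms by (intro sum_mono mult_mono power_mono) auto
  thus ?thesis
    unfolding Suc diff_power_eq_sum using assms by (simp add: mult_left_mono)
qed simp

lemma log_tail_diff_le_next_power_diff:
  assumes "N \<ge> 1" "0 \<le> h" "h \<le> u" "u < 1"
  shows "real N * (log_tail N u - log_tail N (u - h)) \<le> ((u + h) ^ N - u ^ N) / (1 - u)"
proof -
  have "real N * (log_tail N u - log_tail N (u - h)) \<le> (u ^ N - (u - h) ^ N) / (1 - u)"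
    using assms by (intro log_tail_diff_le_power_diff_div) auto
  also have "\<dots> \<le> ((u + h) ^ N - u ^ N) / (1 - u)"
    using assms power_diff_le_next_power_diff[of h u N] by (intro divide_right_mono) auto
  finally show ?thesis .
qed

text \<open>Termwise, q^m a^k \<le> a^m q^k whenever k \<le> m.\<close>
lemma log_tail_geometric_ratio_mono:
  assumes "0 \<le> q" "q \<le> a" "a < 1"
  shows "log_tail N q * (\<Sum>k<N. a ^ k) \<le> log_tail N a * (\<Sum>k<N. q ^ k)"
proof -
  have "log_tail N q * a ^ k \<le> log_tail N a * q ^ k" if "k < N" for k
  proof (rule sums_le[OF _ sums_mult2[OF log_tail_sums] sums_mult2[OF log_tail_sums]])
    fix i
    have "q ^ (i + N) * a ^ k = (q ^ k * a ^ k) * q ^ (i + N - k)"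
      using that by (simp flip: power_add)
    also have "\<dots> \<le> (q ^ k * a ^ k) * a ^ (i + N - k)"
      using assms by (intro mult_left_mono power_mono) auto
    also have "\<dots> = a ^ (i + N) * q ^ k"
      using that by (simp add: mult_ac flip: power_add)
    finally show "1 / real (i + N) * q ^ (i + N) * a ^ k \<le> 1 / real (i + N) * a ^ (i + N) * q ^ k"
      by (simp add: mult.assoc divide_right_mono)
  qed (use assms in auto)
  hence "(\<Sum>k<N. log_tail N q * a ^ k) \<le> (\<Sum>k<N. log_tail N a * q ^ k)"
    by (intro sum_mono) auto
  thus ?thesis by (simp add: sum_distrib_left)
qed

lemma geometric_sum_pos:
  fixes a :: real
  assumes "0 \<le> a" "N \<ge> 1"
  shows "0 < (\<Sum>k<N. a ^ k)"
proof -
  have "a ^ 0 \<le> (\<Sum>k<N. a ^ k)" using assms by (intro member_le_sum) auto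
  thus ?thesis by simp
qed

lemma divide_add_le_divide_add:
  fixes a b c d :: real
  assumes "0 \<le> a" "0 < b" "0 \<le> c" "0 < d" "a * d \<le> c * b"
  shows "a / (a + b) \<le> c / (c + d)"
  using assms by (simp add: divide_simps algebra_simps)

definition cum_prob :: "(nat \<Rightarrow> real) \<Rightarrow> nat \<Rightarrow> real" where
  "cum_prob p k = (\<Sum>j=1..<k. p j)"

lemma cum_prob_0 [simp]: "cum_prob p 0 = 0"
  and cum_prob_1 [simp]: "cum_prob p 1 = 0" "cum_prob p (Suc 0) = 0"
  by (simp_all add: cum_prob_def)

lemma zprob_eq_cum_prob: "zprob N p i = cum_prob p (Suc i) ^ N - cum_prob p i ^ N"
  unfolding zprob_def cum_prob_def by (simp add: atLeastLessThanSuc_atLeastAtMost)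

lemma valid_dist_imp_pos: "valid_dist K p \<Longrightarrow> K \<ge> 1"
  by (cases K) (auto simp: valid_dist_def)

lemma cum_prob_mono:
  assumes "valid_dist K p" "i \<le> j" "j \<le> Suc K"
  shows "cum_prob p i \<le> cum_prob p j"
  using assms unfolding valid_dist_def cum_prob_def
  by (intro sum_mono2) (auto intro: less_imp_le)

lemma cum_prob_nonneg: "valid_dist K p \<Longrightarrow> j \<le> Suc K \<Longrightarrow> 0 \<le> cum_prob p j"
  using cum_prob_mono[of K p 0 j] by simp

lemma cum_prob_Suc_top: "valid_dist K p \<Longrightarrow> cum_prob p (Suc K) = 1"
  unfolding valid_dist_def cum_prob_def by (simp add: atLeastLessThanSuc_atLeastAtMost)

lemma tail_prob_eq:
  assumes "valid_dist K p" "1 \<le> k" "k \<le> Suc K"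
  shows "(\<Sum>j=k..K. p j) = 1 - cum_prob p k"
proof -
  have "cum_prob p k + (\<Sum>j=k..<Suc K. p j) = cum_prob p (Suc K)"
    unfolding cum_prob_def using assms by (intro sum.atLeastLessThan_concat) auto
  thus ?thesis using cum_prob_Suc_top[OF assms(1)] by (simp add: atLeastLessThanSuc_atLeastAtMost)
qed

lemma cum_prob_less_1:
  assumes "valid_dist K p" "j \<le> K"
  shows "cum_prob p j < 1"
proof -
  have K: "K \<ge> 1" using valid_dist_imp_pos[OF assms(1)] .
  have "cum_prob p j \<le> cum_prob p K" using cum_prob_mono[OF assms(1)] assms by simp
  also have "\<dots> = 1 - p K" using tail_prob_eq[OF assms(1), of K] K by simp
  also have "\<dots> < 1" using assms(1) K unfolding valid_dist_def by auto
  finally show ?thesis .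
qed

lemma zprob_nonneg:
  assumes "valid_dist K p" "i \<le> K"
  shows "0 \<le> zprob N p i"
  unfolding zprob_eq_cum_prob using assms
  by (simp add: power_mono cum_prob_mono cum_prob_nonneg)

lemma sum_zprob_from:
  assumes "valid_dist K p" "m \<le> Suc K"
  shows "(\<Sum>i=m..K. zprob N p i) = 1 - cum_prob p m ^ N"
proof -
  have "(\<Sum>i=m..K. zprob N p i) = (\<Sum>i=m..<Suc K. cum_prob p (Suc i) ^ N - cum_prob p i ^ N)"
    by (simp add: zprob_eq_cum_prob atLeastLessThanSuc_atLeastAtMost)
  also have "\<dots> = 1 - cum_prob p m ^ N"
    using assms by (subst sum_Suc_diff') (auto simp: cum_prob_Suc_top)
  finally show ?thesis .
qed

lemma valid_values_mono:
  assumes "valid_values r K x" "1 \<le> i" "i \<le> j" "j \<le> K"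
  shows "x i \<le> x j"
  using assms(3)
proof (induction j rule: dec_induct)
  case (step n)
  hence "x n < x (Suc n)" using assms unfolding valid_values_def by auto
  thus ?case using step.IH by simp
qed simp

lemma valid_values_pos:
  assumes "valid_values r K x" "i \<in> {1..K}"
  shows "x i > 0"
  using valid_values_mono[OF assms(1), of 1 i] assms unfolding valid_values_def by auto

lemma reserve_index_is_argmax:
  assumes "K \<ge> 1"
  shows "reserve_index K x p \<in> {i \<in> {1..K}. \<forall>k\<in>{1..K}.
           x k * (\<Sum>j=k..K. p j) \<le> x i * (\<Sum>j=i..K. p j)}" (is "_ \<in> ?T")
proof -
  define f where "f k = x k * (\<Sum>j=k..K. p j)" for k
  have "Max (f ` {1..K}) \<in> f ` {1..K}" using assms by (intro Max_in) auto
  then obtain i where "i \<in> {1..K}" "f i = Max (f ` {1..K})" by auto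
  hence "i \<in> ?T" by (auto simp: f_def[symmetric])
  hence "Max ?T \<in> ?T" by (intro Max_in) auto
  thus ?thesis unfolding reserve_index_def .
qed

lemma reserve_index_eq_top:
  assumes "K \<ge> 1" "\<And>k. k \<in> {1..K} \<Longrightarrow> x k * (\<Sum>j=k..K. p j) = c"
  shows "reserve_index K x p = K"
proof -
  have "{i \<in> {1..K}. \<forall>k\<in>{1..K}. x k * (\<Sum>j=k..K. p j) \<le> x i * (\<Sum>j=i..K. p j)} = {1..K}"
    using assms(2) by auto
  moreover have "Max {1..K} = K" using assms(1) by (intro Max_eqI) auto
  ultimately show ?thesis unfolding reserve_index_def by simp
qed

lemma ELR_split:
  fixes x p :: "nat \<Rightarrow> real"
  assumes "K \<ge> 1"
  defines "t \<equiv> reserve_index K x p"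
  shows "ELR N K x p = (\<Sum>i=1..<t. zprob N p i * x i)
           / ((\<Sum>i=1..<t. zprob N p i * x i) + (\<Sum>i=t..K. zprob N p i * x i))"
proof -
  have "t \<in> {1..K}" using reserve_index_is_argmax[OF assms(1)] unfolding t_def by blast
  hence "(\<Sum>i=1..<t. zprob N p i * x i) + (\<Sum>i=t..<Suc K. zprob N p i * x i)
         = (\<Sum>i=1..<Suc K. zprob N p i * x i)"
    by (intro sum.atLeastLessThan_concat) auto
  thus ?thesis unfolding ELR_def t_def by (simp add: atLeastLessThanSuc_atLeastAtMost)
qed

lemma revenue_le_reserve_revenue:
  fixes x p :: "nat \<Rightarrow> real"
  assumes "valid_dist K p" "k \<in> {1..K}"
  defines "t \<equiv> reserve_index K x p"
  shows "x k * (1 - cum_prob p k) \<le> x t * (1 - cum_prob p t)"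
proof -
  have "t \<in> {1..K}" "x k * (\<Sum>j=k..K. p j) \<le> x t * (\<Sum>j=t..K. p j)"
    using reserve_index_is_argmax[OF valid_dist_imp_pos[OF assms(1)]] assms(2)
    unfolding t_def by blast+
  thus ?thesis using tail_prob_eq[OF assms(1)] assms(2) by simp
qed

text \<open>The bound x i \<le> x t (1 - q) / (1 - cum_prob p i) turns each term into an increment of log_tail;
  these telescope.\<close>
lemma welfare_below_reserve_le:
  fixes x p :: "nat \<Rightarrow> real"
  assumes "N \<ge> 1" "valid_dist K p" "valid_values r K x"
  defines "t \<equiv> reserve_index K x p"
  defines "q \<equiv> cum_prob p t"
  shows "(\<Sum>i=1..<t. zprob N p i * x i) \<le> x t * (1 - q) * (real N * log_tail N q)"
proof -
  let ?C = "cum_prob p"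
  have t: "t \<in> {1..K}"
    using reserve_index_is_argmax[OF valid_dist_imp_pos[OF assms(2)]] unfolding t_def by blast
  have "q < 1" using cum_prob_less_1[OF assms(2)] t unfolding q_def by simp
  hence R: "0 \<le> x t * (1 - q)" using valid_values_pos[OF assms(3) t] by simp
  have "zprob N p i * x i \<le> x t * (1 - q) * (real N * (log_tail N (?C (Suc i)) - log_tail N (?C i)))"
    if i: "i \<in> {1..<t}" for i
  proof -
    have C: "0 \<le> ?C i" "?C i \<le> ?C (Suc i)" "?C (Suc i) < 1"
      using i t cum_prob_nonneg[OF assms(2)] cum_prob_mono[OF assms(2)] cum_prob_less_1[OF assms(2)]
      by auto
    have "x i * (1 - ?C i) \<le> x t * (1 - q)"
      using revenue_le_reserve_revenue[OF assms(2)] i t unfolding t_def q_def by simp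
    hence "x i \<le> x t * (1 - q) / (1 - ?C i)" using C by (simp add: le_divide_eq)
    hence "zprob N p i * x i \<le> zprob N p i * (x t * (1 - q) / (1 - ?C i))"
      using zprob_nonneg[OF assms(2)] i t by (intro mult_left_mono) auto
    also have "\<dots> = x t * (1 - q) * (zprob N p i / (1 - ?C i))" by simp
    also have "\<dots> \<le> x t * (1 - q) * (real N * (log_tail N (?C (Suc i)) - log_tail N (?C i)))"
      using R power_diff_div_le_log_tail_diff[OF assms(1) C] unfolding zprob_eq_cum_prob
      by (intro mult_left_mono)
    finally show ?thesis .
  qed
  hence "(\<Sum>i=1..<t. zprob N p i * x i)
      \<le> (\<Sum>i=1..<t. x t * (1 - q) * (real N * (log_tail N (?C (Suc i)) - log_tail N (?C i))))"
    by (intro sum_mono) auto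
  also have "\<dots> = x t * (1 - q) * real N * (\<Sum>i=1..<t. log_tail N (?C (Suc i)) - log_tail N (?C i))"
    by (simp add: sum_distrib_left mult.assoc)
  also have "\<dots> = x t * (1 - q) * (real N * log_tail N q)"
    using t unfolding q_def by (subst sum_Suc_diff') auto
  finally show ?thesis .
qed

lemma welfare_from_reserve_ge:
  fixes x p :: "nat \<Rightarrow> real"
  assumes "valid_dist K p" "valid_values r K x"
  defines "t \<equiv> reserve_index K x p"
  shows "x t * (1 - cum_prob p t ^ N) \<le> (\<Sum>i=t..K. zprob N p i * x i)"
proof -
  have t: "t \<in> {1..K}"
    using reserve_index_is_argmax[OF valid_dist_imp_pos[OF assms(1)]] unfolding t_def by blast
  have "x t * (1 - cum_prob p t ^ N) = (\<Sum>i=t..K. zprob N p i) * x t"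
    using sum_zprob_from[OF assms(1), of t N] t by simp
  also have "\<dots> = (\<Sum>i=t..K. zprob N p i * x t)"
    by (rule sum_distrib_right)
  also have "\<dots> \<le> (\<Sum>i=t..K. zprob N p i * x i)"
    using t zprob_nonneg[OF assms(1)] valid_values_mono[OF assms(2)]
    by (intro sum_mono mult_left_mono) auto
  finally show ?thesis .
qed

lemma cum_prob_reserve_le:
  fixes x p :: "nat \<Rightarrow> real"
  assumes "r > 0" "valid_dist K p" "valid_values r K x"
  defines "t \<equiv> reserve_index K x p"
  shows "cum_prob p t \<le> 1 - 1 / r"
proof -
  have K: "K \<ge> 1" using valid_dist_imp_pos[OF assms(2)] .
  have t: "t \<in> {1..K}" using reserve_index_is_argmax[OF K] unfolding t_def by blast
  have "x t \<le> x K" using valid_values_mono[OF assms(3)] t by auto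
  also have "\<dots> \<le> r * x 1" using assms(3) unfolding valid_values_def by simp
  also have "\<dots> \<le> r * (x t * (1 - cum_prob p t))"
    using revenue_le_reserve_revenue[OF assms(2), of 1 x] K assms(1) unfolding t_def by simp
  finally have "x t * 1 \<le> x t * (r * (1 - cum_prob p t))" by (simp add: mult_ac)
  hence "1 \<le> r * (1 - cum_prob p t)" using valid_values_pos[OF assms(3) t] by simp
  thus ?thesis using assms(1) by (simp add: field_simps)
qed

lemma welfare_below_reserve_mult_geometric_le:
  fixes x p :: "nat \<Rightarrow> real"
  assumes "N \<ge> 1" "valid_dist K p" "valid_values r K x"
  defines "t \<equiv> reserve_index K x p"
  assumes "cum_prob p t \<le> a" "a < 1"
  shows "(\<Sum>i=1..<t. zprob N p i * x i) * (\<Sum>k<N. a ^ k)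
         \<le> real N * log_tail N a * (x t * (1 - cum_prob p t ^ N))"
proof -
  define q where "q = cum_prob p t"
  have t: "t \<in> {1..K}"
    using reserve_index_is_argmax[OF valid_dist_imp_pos[OF assms(2)]] unfolding t_def by blast
  have q: "0 \<le> q" "q < 1" using cum_prob_nonneg[OF assms(2)] cum_prob_less_1[OF assms(2)] t
    unfolding q_def by auto
  have xt: "x t > 0" using valid_values_pos[OF assms(3) t] .
  have "(\<Sum>i=1..<t. zprob N p i * x i) * (\<Sum>k<N. a ^ k)
      \<le> x t * (1 - q) * (real N * log_tail N q) * (\<Sum>k<N. a ^ k)"
    using welfare_below_reserve_le[OF assms(1-3)] geometric_sum_pos[OF _ assms(1), of a] q assms(5)
    unfolding t_def q_def by (intro mult_right_mono) auto
  also have "\<dots> = x t * (1 - q) * real N * (log_tail N q * (\<Sum>k<N. a ^ k))"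
    by (simp add: mult_ac)
  also have "\<dots> \<le> x t * (1 - q) * real N * (log_tail N a * (\<Sum>k<N. q ^ k))"
    using log_tail_geometric_ratio_mono[OF q(1) _ assms(6)] assms(5) xt q
    unfolding q_def by (intro mult_left_mono) auto
  also have "\<dots> = real N * log_tail N a * (x t * (1 - q ^ N))"
    by (simp add: one_diff_power_eq mult_ac)
  finally show ?thesis unfolding q_def .
qed

lemma ELR_le:
  fixes x p :: "nat \<Rightarrow> real"
  assumes "r > 1" "N \<ge> 1" "valid_dist K p" "valid_values r K x"
  defines "a \<equiv> 1 - 1 / r"
  shows "ELR N K x p \<le> real N * log_tail N a / ((\<Sum>k<N. a ^ k) + real N * log_tail N a)"
proof -
  define t where "t = reserve_index K x p"
  define L where "L = (\<Sum>i=1..<t. zprob N p i * x i)"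
  define H where "H = (\<Sum>i=t..K. zprob N p i * x i)"
  have K: "K \<ge> 1" using valid_dist_imp_pos[OF assms(3)] .
  have t: "t \<in> {1..K}" using reserve_index_is_argmax[OF K] unfolding t_def by blast
  have a: "0 \<le> a" "a < 1" using assms(1) unfolding a_def by auto
  have q: "cum_prob p t \<le> a" "cum_prob p t < 1"
    using cum_prob_reserve_le[OF _ assms(3,4)] cum_prob_less_1[OF assms(3)] assms(1) t
    unfolding t_def a_def by auto
  have H: "x t * (1 - cum_prob p t ^ N) \<le> H"
    using welfare_from_reserve_ge[OF assms(3,4)] unfolding H_def t_def .
  have "L * (\<Sum>k<N. a ^ k) \<le> real N * log_tail N a * (x t * (1 - cum_prob p t ^ N))"
    using welfare_below_reserve_mult_geometric_le[OF assms(2-4) _ a(2)] q(1) unfolding L_def t_def .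
  also have "\<dots> \<le> real N * log_tail N a * H"
    using H log_tail_nonneg[OF a] by (intro mult_left_mono) auto
  finally have key: "L * (\<Sum>k<N. a ^ k) \<le> real N * log_tail N a * H" .
  have "0 < x t * (1 - cum_prob p t ^ N)"
    using valid_values_pos[OF assms(4) t] q(2) cum_prob_nonneg[OF assms(3)] t assms(2)
    by (simp add: power_less_one_iff)
  hence "0 < H" using H by linarith
  moreover have "0 \<le> L"
    unfolding L_def using t zprob_nonneg[OF assms(3)] valid_values_pos[OF assms(4)]
    by (intro sum_nonneg mult_nonneg_nonneg) (auto intro: less_imp_le)
  ultimately have "L / (L + H) \<le> real N * log_tail N a / (real N * log_tail N a + (\<Sum>k<N. a ^ k))"
    using key geometric_sum_pos[OF a(1) assms(2)] log_tail_nonneg[OF a]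
    by (intro divide_add_le_divide_add) auto
  thus ?thesis using ELR_split[OF K] unfolding L_def H_def t_def by (simp add: add.commute)
qed

text \<open>An equal-revenue distribution: every price x k sells with probability 1 / x k,
  so all posted prices earn revenue 1 and the reserve is the top value.\<close>
definition equal_revenue_prob :: "nat \<Rightarrow> real \<Rightarrow> nat \<Rightarrow> real" where
  "equal_revenue_prob K \<delta> j = (if j < K then \<delta> else 1 - real (K - 1) * \<delta>)"

definition equal_revenue_value :: "real \<Rightarrow> nat \<Rightarrow> real" where
  "equal_revenue_value \<delta> j = 1 / (1 - real (j - 1) * \<delta>)"

lemma equal_revenue_cum_prob:
  "j \<le> K \<Longrightarrow> cum_prob (equal_revenue_prob K \<delta>) j = real (j - 1) * \<delta>"
  unfolding cum_prob_def equal_revenue_prob_def by simp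

lemma equal_revenue_valid_dist:
  assumes "0 < \<delta>" "real (K - 1) * \<delta> < 1" "K \<ge> 1"
  shows "valid_dist K (equal_revenue_prob K \<delta>)"
proof -
  have "(\<Sum>i=1..K. equal_revenue_prob K \<delta> i)
      = cum_prob (equal_revenue_prob K \<delta>) K + equal_revenue_prob K \<delta> K"
    using assms(3) unfolding cum_prob_def
    by (simp add: sum.atLeastLessThan_Suc flip: atLeastLessThanSuc_atLeastAtMost)
  also have "\<dots> = 1" by (simp add: equal_revenue_cum_prob equal_revenue_prob_def)
  finally show ?thesis using assms unfolding valid_dist_def equal_revenue_prob_def by auto
qed

lemma equal_revenue_revenue:
  assumes "0 < \<delta>" "real (K - 1) * \<delta> < 1" "k \<in> {1..K}"
  shows "equal_revenue_value \<delta> k * (\<Sum>j=k..K. equal_revenue_prob K \<delta> j) = 1"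
proof -
  have "real (k - 1) * \<delta> \<le> real (K - 1) * \<delta>" using assms by (intro mult_right_mono) auto
  hence "real (k - 1) * \<delta> < 1" using assms(2) by linarith
  thus ?thesis
    using tail_prob_eq[OF equal_revenue_valid_dist[OF assms(1,2)], of k] assms
    by (simp add: equal_revenue_value_def equal_revenue_cum_prob)
qed

lemma equal_revenue_reserve_index:
  assumes "0 < \<delta>" "real (K - 1) * \<delta> < 1" "K \<ge> 1"
  shows "reserve_index K (equal_revenue_value \<delta>) (equal_revenue_prob K \<delta>) = K"
  using equal_revenue_revenue[OF assms(1,2)] assms(3) by (intro reserve_index_eq_top) auto

lemma equal_revenue_valid_values:
  assumes "0 < \<delta>" "real (K - 1) * \<delta> < 1" "1 \<le> r * (1 - real (K - 1) * \<delta>)"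
  shows "valid_values r K (equal_revenue_value \<delta>)"
proof -
  have "equal_revenue_value \<delta> i < equal_revenue_value \<delta> (Suc i)" if "i \<in> {1..<K}" for i
  proof -
    have "real i * \<delta> \<le> real (K - 1) * \<delta>" using that assms by (intro mult_right_mono) auto
    hence "real i * \<delta> < 1" using assms(2) by linarith
    moreover have "real (i - 1) * \<delta> < real i * \<delta>" using that assms by simp
    ultimately show ?thesis
      unfolding equal_revenue_value_def by (intro divide_strict_left_mono mult_pos_pos) auto
  qed
  moreover have "equal_revenue_value \<delta> K \<le> r"
    using assms unfolding equal_revenue_value_def by (simp add: divide_le_eq mult.commute)
  ultimately show ?thesis unfolding valid_values_def equal_revenue_value_def by simp
qed

lemma equal_revenue_top_welfare:
  assumes "0 < \<delta>" "real (K - 1) * \<delta> < 1" "K \<ge> 1"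
  shows "zprob N (equal_revenue_prob K \<delta>) K * equal_revenue_value \<delta> K
         = (\<Sum>k<N. (real (K - 1) * \<delta>) ^ k)"
proof -
  have "zprob N (equal_revenue_prob K \<delta>) K = 1 - (real (K - 1) * \<delta>) ^ N"
    using cum_prob_Suc_top[OF equal_revenue_valid_dist[OF assms]] assms(3)
    by (simp add: zprob_eq_cum_prob equal_revenue_cum_prob)
  also have "\<dots> = (1 - real (K - 1) * \<delta>) * (\<Sum>k<N. (real (K - 1) * \<delta>) ^ k)"
    by (rule one_diff_power_eq)
  finally show ?thesis using assms(2) by (simp add: equal_revenue_value_def)
qed

lemma equal_revenue_welfare_below_top_ge:
  assumes "N \<ge> 1" "0 < \<delta>" "real (K - 1) * \<delta> < 1" "K \<ge> 1"
  shows "real N * log_tail N (real (K - 2) * \<delta>)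
         \<le> (\<Sum>i=1..<K. zprob N (equal_revenue_prob K \<delta>) i * equal_revenue_value \<delta> i)"
proof -
  let ?p = "equal_revenue_prob K \<delta>" and ?x = "equal_revenue_value \<delta>"
  have lt: "real i * \<delta> < 1" if "i \<le> K - 1" for i
  proof -
    have "real i * \<delta> \<le> real (K - 1) * \<delta>" using that assms(2) by (intro mult_right_mono) auto
    thus ?thesis using assms(3) by linarith
  qed
  have "real N * (log_tail N (real i * \<delta>) - log_tail N (real (i - 1) * \<delta>))
        \<le> zprob N ?p (Suc i) * ?x (Suc i)" if i: "i \<in> {1..<K - 1}" for i
  proof -
    have "real (i - 1) * \<delta> = real i * \<delta> - \<delta>" "real (Suc i) * \<delta> = real i * \<delta> + \<delta>"
      using i by (simp_all add: of_nat_diff algebra_simps)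
    moreover have "real N * (log_tail N (real i * \<delta>) - log_tail N (real i * \<delta> - \<delta>))
        \<le> ((real i * \<delta> + \<delta>) ^ N - (real i * \<delta>) ^ N) / (1 - real i * \<delta>)"
      using i assms lt[of i] by (intro log_tail_diff_le_next_power_diff) auto
    moreover have "Suc (Suc i) \<le> K" using i by auto
    ultimately show ?thesis
      by (simp add: zprob_eq_cum_prob equal_revenue_cum_prob equal_revenue_value_def)
  qed
  note increment_le = this
  have "real N * log_tail N (real (K - 2) * \<delta>)
      = real N * (\<Sum>i=1..<K - 1. log_tail N (real i * \<delta>) - log_tail N (real (i - 1) * \<delta>))"
    using sum_Suc_diff'[of 1 "K - 1" "\<lambda>i. log_tail N (real (i - 1) * \<delta>)"] assms(4)
    by (cases "K = 1") (simp_all add: numeral_2_eq_2)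
  also have "\<dots> \<le> (\<Sum>i=1..<K - 1. zprob N ?p (Suc i) * ?x (Suc i))"
    unfolding sum_distrib_left using increment_le by (intro sum_mono) auto
  also have "\<dots> = (\<Sum>i=2..<K. zprob N ?p i * ?x i)"
    using assms(4) sum.shift_bounds_Suc_ivl[of "\<lambda>i. zprob N ?p i * ?x i" 1 "K - 1"]
    by (simp add: numeral_2_eq_2)
  also have "\<dots> \<le> (\<Sum>i=1..<K. zprob N ?p i * ?x i)"
  proof (rule sum_mono2)
    fix i assume "i \<in> {1..<K} - {2..<K}"
    hence "0 \<le> zprob N ?p i" "0 < ?x i"
      using zprob_nonneg[OF equal_revenue_valid_dist[OF assms(2-4)]] lt[of "i - 1"]
      by (auto simp: equal_revenue_value_def)
    thus "0 \<le> zprob N ?p i * ?x i" by simp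
  qed auto
  finally show ?thesis .
qed

lemma ELR_equal_revenue_ge:
  assumes "N \<ge> 1" "0 < \<delta>" "real (K - 1) * \<delta> < 1" "K \<ge> 1"
  shows "real N * log_tail N (real (K - 2) * \<delta>)
           / ((\<Sum>k<N. (real (K - 1) * \<delta>) ^ k) + real N * log_tail N (real (K - 2) * \<delta>))
         \<le> ELR N K (equal_revenue_value \<delta>) (equal_revenue_prob K \<delta>)"
proof -
  define L where "L = (\<Sum>i=1..<K. zprob N (equal_revenue_prob K \<delta>) i * equal_revenue_value \<delta> i)"
  define P where "P = (\<Sum>k<N. (real (K - 1) * \<delta>) ^ k)"
  define G where "G = real N * log_tail N (real (K - 2) * \<delta>)"
  have "real (K - 2) * \<delta> \<le> real (K - 1) * \<delta>" using assms(2) by (intro mult_right_mono) auto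
  hence "real (K - 2) * \<delta> < 1" using assms(3) by linarith
  hence "0 \<le> G" unfolding G_def using assms(2) by (intro mult_nonneg_nonneg log_tail_nonneg) auto
  moreover have "0 < P" unfolding P_def using assms(1,2) by (intro geometric_sum_pos) auto
  ultimately have "G / (G + P) \<le> L / (L + P)"
    using equal_revenue_welfare_below_top_ge[OF assms] unfolding G_def[symmetric] L_def[symmetric]
    by (intro divide_add_le_divide_add) auto
  moreover have "ELR N K (equal_revenue_value \<delta>) (equal_revenue_prob K \<delta>) = L / (L + P)"
    using ELR_split[OF assms(4)] equal_revenue_reserve_index[OF assms(2-4)]
      equal_revenue_top_welfare[OF assms(2-4)] unfolding L_def P_def by simp
  ultimately show ?thesis unfolding G_def[symmetric] P_def[symmetric] by (simp add: add.commute)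
qed

lemma gamma2_eq:
  assumes "r > 1"
  shows "gamma2 r K N = real N * log_tail N (1 - 1 / r)"
  using log_tail_sums[of "1 - 1 / r" N] assms unfolding gamma2_def by (simp add: sums_iff)

lemma gamma1_eq:
  assumes "r > 1" "K > 2"
  shows "gamma1 r K N = real N * log_tail N ((1 - 1 / r) * (1 - 1 / (real K - 1)))"
proof -
  have "(1 - 1 / r) * (1 - 1 / (real K - 1)) < 1 * 1"
    using assms by (intro mult_strict_mono) auto
  moreover have "0 \<le> (1 - 1 / r) * (1 - 1 / (real K - 1))"
    using assms by (intro mult_nonneg_nonneg) auto
  ultimately have "\<bar>(1 - 1 / r) * (1 - 1 / (real K - 1))\<bar> < 1" by simp
  thus ?thesis
    using log_tail_sums[of "(1 - 1 / r) * (1 - 1 / (real K - 1))" N]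
    unfolding gamma1_def by (simp add: sums_iff power_mult_distrib mult.assoc)
qed

lemma power_diff_div_eq_geometric_sum:
  fixes r :: real
  assumes "r > 0" "N \<ge> 1"
  shows "(r ^ N - (r - 1) ^ N) / r ^ (N - 1) = (\<Sum>k<N. (1 - 1 / r) ^ k)"
proof -
  have "r - 1 = r * (1 - 1 / r)" using assms(1) by (simp add: field_simps)
  hence "(r - 1) ^ N = r ^ N * (1 - 1 / r) ^ N" by (simp only: power_mult_distrib)
  hence "r ^ N - (r - 1) ^ N = r ^ N * (1 - (1 - 1 / r) ^ N)" by (simp add: right_diff_distrib)
  also have "\<dots> = r ^ N * (1 / r) * (\<Sum>k<N. (1 - 1 / r) ^ k)"
    by (simp add: one_diff_power_eq)
  also have "\<dots> = r ^ (N - 1) * (\<Sum>k<N. (1 - 1 / r) ^ k)"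
    using assms by (cases N) auto
  finally show ?thesis using assms(1) by simp
qed

lemma exists_ELR_ge:
  assumes "r > 1" "N \<ge> 1" "K \<ge> 2"
  defines "a \<equiv> 1 - 1 / r"
  defines "b \<equiv> a * (1 - 1 / (real K - 1))"
  shows "\<exists>x p. valid_dist K p \<and> valid_values r K x \<and>
           real N * log_tail N b / ((\<Sum>k<N. a ^ k) + real N * log_tail N b) \<le> ELR N K x p"
proof -
  define \<delta> where "\<delta> = a / (real K - 1)"
  have a: "0 < a" "a < 1" "1 \<le> r * (1 - a)" using assms(1) unfolding a_def by auto
  have \<delta>: "0 < \<delta>" "real (K - 1) * \<delta> = a" "real (K - 2) * \<delta> = b"
    using a assms(3) unfolding \<delta>_def b_def by (auto simp: of_nat_diff field_simps)
  hence \<delta>_lt: "real (K - 1) * \<delta> < 1" using a(2) by linarith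
  show ?thesis
    using ELR_equal_revenue_ge[OF assms(2) \<delta>(1) \<delta>_lt] equal_revenue_valid_dist[OF \<delta>(1) \<delta>_lt]
      equal_revenue_valid_values[OF \<delta>(1) \<delta>_lt] assms(3) a(3)
    unfolding \<delta>(2,3) by fastforce
qed

theorem proposition8:
  fixes r :: real and K N :: nat
  assumes "r > 1" and "N \<ge> 1" and "K > 2"
  shows "gamma1 r K N / ((r ^ N - (r - 1) ^ N) / r ^ (N - 1) + gamma1 r K N) \<le> eta r K N
       \<and> eta r K N \<le> gamma2 r K N / ((r ^ N - (r - 1) ^ N) / r ^ (N - 1) + gamma2 r K N)"
proof -
  define a where "a = 1 - 1 / r"
  define S where "S = {ELR N K x p | x p. valid_dist K p \<and> valid_values r K x}"
  have upper: "e \<le> real N * log_tail N a / ((\<Sum>k<N. a ^ k) + real N * log_tail N a)" if "e \<in> S" for e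
    using that ELR_le[OF assms(1,2)] unfolding S_def a_def by auto
  obtain x p where "valid_dist K p" "valid_values r K x" and lower:
    "real N * log_tail N (a * (1 - 1 / (real K - 1)))
       / ((\<Sum>k<N. a ^ k) + real N * log_tail N (a * (1 - 1 / (real K - 1)))) \<le> ELR N K x p"
    using exists_ELR_ge[OF assms(1,2) less_imp_le[OF assms(3)]] unfolding a_def by blast
  hence "ELR N K x p \<in> S" unfolding S_def by auto
  hence "ELR N K x p \<le> Sup S"
      "Sup S \<le> real N * log_tail N a / ((\<Sum>k<N. a ^ k) + real N * log_tail N a)"
    using upper by (auto intro!: cSup_upper cSup_least bdd_aboveI)
  moreover have "(r ^ N - (r - 1) ^ N) / r ^ (N - 1) = (\<Sum>k<N. a ^ k)"
    unfolding a_def using assms(1,2) by (intro power_diff_div_eq_geometric_sum) auto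
  ultimately show ?thesis
    using lower unfolding eta_def S_def[symmetric] gamma1_eq[OF assms(1,3)] gamma2_eq[OF assms(1)]
      a_def[symmetric] by auto
qed

end
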